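(* Let $G$ be a distance-regular graph of diameter $d$ which is an antipodal double cover, and let $B$ be its tridiagonal intersection matrix. If $G$ admits a distance magic labeling, then $\ker B$ has a basis consisting of a single vector $\boldsymbol{u}=(u_0,\dots,u_d)^T$ with $u_0=1$ and $u_d=-1$. If $G$ admits a closed distance magic labeling, then $\ker(I+B)$ has a basis consisting of a single vector $\boldsymbol{u}=(u_0,\dots,u_d)^T$ with $u_0=1$ and $u_d=-1$.
   Context: A connected graph $G$ of diameter $d$ is distance-regular if there are non-negative integers $b_i,c_i$ ($0\le i\le d$) such that for any two vertices $x,y$ at distance $i$, $y$ has exactly $c_i$ neighbours at distance $i-1$ from $x$ and exactly $b_i$ neighbours at distance $i+1$ from $x$. $G$ is $r$-regular with $r=b_0$, $c_0=b_d=0$, $c_1=1$, $a_i=r-b_i-c_i$. $B$ is the $(d+1)\times(d+1)$ tridiagonal matrix indexed by $0,\dots,d$ with $B_{i,i}=a_i$, $B_{i,i+1}=c_{i+1}$, $B_{i+1,i}=b_i$, other entries $0$. $G$ is an antipodal double cover if every vertex has exactly one vertex at distance $d$ from it. A distance magic (resp. closed distance magic) labeling of $G$ of order $N$ is a bijection $l:V(G)\to\{1,\dots,N\}$ such that $\sum_{y\in N(x)}l(y)$ (resp. $\sum_{y\in N(x)\cup\{x\}}l(y)$) is the same for every vertex $x$. *)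

theory Defs
  imports Main "Jordan_Normal_Form.Matrix_Kernel"
begin

definition simple_graph :: "'a set \<Rightarrow> ('a \<Rightarrow> 'a \<Rightarrow> bool) \<Rightarrow> bool" where
  "simple_graph V E \<longleftrightarrow> finite V \<and> V \<noteq> {} \<and>
     (\<forall>x y. E x y \<longrightarrow> x \<in> V \<and> y \<in> V) \<and> (\<forall>x y. E x y \<longrightarrow> E y x) \<and> (\<forall>x. \<not> E x x)"

definition gdist :: "('a \<Rightarrow> 'a \<Rightarrow> bool) \<Rightarrow> 'a \<Rightarrow> 'a \<Rightarrow> nat" where
  "gdist E x y = (LEAST n. (E ^^ n) x y)"

definition connected_graph :: "'a set \<Rightarrow> ('a \<Rightarrow> 'a \<Rightarrow> bool) \<Rightarrow> bool" where
  "connected_graph V E \<longleftrightarrow> (\<forall>x\<in>V. \<forall>y\<in>V. \<exists>n. (E ^^ n) x y)"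

definition diameter :: "'a set \<Rightarrow> ('a \<Rightarrow> 'a \<Rightarrow> bool) \<Rightarrow> nat" where
  "diameter V E = Max {gdist E x y | x y. x \<in> V \<and> y \<in> V}"

definition distance_regular ::
  "'a set \<Rightarrow> ('a \<Rightarrow> 'a \<Rightarrow> bool) \<Rightarrow> nat \<Rightarrow> (nat \<Rightarrow> nat) \<Rightarrow> (nat \<Rightarrow> nat) \<Rightarrow> bool" where
  "distance_regular V E d b c \<longleftrightarrow>
     simple_graph V E \<and> connected_graph V E \<and> diameter V E = d \<and>
     (\<forall>i\<le>d. \<forall>x\<in>V. \<forall>y\<in>V. gdist E x y = i \<longrightarrow>
        card {z\<in>V. E y z \<and> gdist E x z + 1 = i} = c i \<and>
        card {z\<in>V. E y z \<and> gdist E x z = i + 1} = b i)"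

definition inter_a :: "(nat \<Rightarrow> nat) \<Rightarrow> (nat \<Rightarrow> nat) \<Rightarrow> nat \<Rightarrow> nat" where
  "inter_a b c i = b 0 - b i - c i"

definition inter_matrix :: "nat \<Rightarrow> (nat \<Rightarrow> nat) \<Rightarrow> (nat \<Rightarrow> nat) \<Rightarrow> real mat" where
  "inter_matrix d b c = mat (d+1) (d+1) (\<lambda>(i,j).
      if i = j then real (inter_a b c i)
      else if j = i + 1 then real (c (i+1))
      else if i = j + 1 then real (b j)
      else 0)"

definition antipodal_double_cover :: "'a set \<Rightarrow> ('a \<Rightarrow> 'a \<Rightarrow> bool) \<Rightarrow> nat \<Rightarrow> bool" where
  "antipodal_double_cover V E d \<longleftrightarrow> (\<forall>x\<in>V. \<exists>!y. y \<in> V \<and> gdist E x y = d)"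

definition distance_magic :: "'a set \<Rightarrow> ('a \<Rightarrow> 'a \<Rightarrow> bool) \<Rightarrow> bool" where
  "distance_magic V E \<longleftrightarrow> (\<exists>l::'a \<Rightarrow> nat. \<exists>k. bij_betw l V {1..card V} \<and>
     (\<forall>x\<in>V. (\<Sum>y\<in>{y\<in>V. E x y}. l y) = k))"

definition closed_distance_magic :: "'a set \<Rightarrow> ('a \<Rightarrow> 'a \<Rightarrow> bool) \<Rightarrow> bool" where
  "closed_distance_magic V E \<longleftrightarrow> (\<exists>l::'a \<Rightarrow> nat. \<exists>k. bij_betw l V {1..card V} \<and>
     (\<forall>x\<in>V. (\<Sum>y\<in>{y\<in>V. E x y} \<union> {x}. l y) = k))"

end

theory Submission
  imports Defs
begin

text \<open>
  Subtracting the mean label from a distance magic (resp. closed distance magic)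
  labeling gives an injective \<open>f\<close> with \<open>(\<Sum>y \<sim> x. f y) + s f x = 0\<close> for all \<open>x\<close>,
  where \<open>s = 0\<close> (resp. \<open>s = 1\<close>): summing over all vertices forces the magic constant
  to vanish. For each vertex \<open>x\<close>, the vector \<open>W\<^sub>x\<close> of sums of \<open>f\<close> over the spheres
  around \<open>x\<close> lies in the kernel of \<open>s I + B\<close>. Since every \<open>c\<^sub>i\<close> is positive, row \<open>i\<close>
  of \<open>s I + B\<close> determines entry \<open>i + 1\<close> of a kernel vector from the earlier ones, so
  the kernel is spanned by \<open>u = W\<^sub>x\<^sub>0 / f x\<^sub>0\<close> and \<open>W\<^sub>x = f x \<cdot> u\<close> for every \<open>x\<close>.
  Entry \<open>d\<close> of \<open>W\<^sub>x\<close> is \<open>f\<close> at the antipode \<open>x'\<close> of \<open>x\<close>, so \<open>f x' = u\<^sub>d f x\<close>;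
  applying this twice gives \<open>u\<^sub>d\<^sup>2 = 1\<close>, and injectivity of \<open>f\<close> excludes \<open>u\<^sub>d = 1\<close>.
\<close>

lemma mat_kernel_iff_rows:
  assumes "A \<in> carrier_mat nr nc"
  shows "v \<in> mat_kernel A \<longleftrightarrow>
           v \<in> carrier_vec nc \<and> (\<forall>i<nr. (\<Sum>j<nc. A $$ (i, j) * v $ j) = 0)"
proof -
  have "A *\<^sub>v v = 0\<^sub>v nr \<longleftrightarrow> (\<forall>i<nr. (\<Sum>j<nc. A $$ (i, j) * v $ j) = 0)"
    if "v \<in> carrier_vec nc" for v
    using assms that
    by (auto simp: vec_eq_iff scalar_prod_def lessThan_atLeast0 mult.commute)
  then show ?thesis using assms unfolding mat_kernel_def by auto
qed

lemma mat_kernel_vec_eq_0_if_superdiagonal: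
  fixes A :: "'a::idom mat"
  assumes A: "A \<in> carrier_mat n n"
    and above_zero: "\<And>i j. j < n \<Longrightarrow> i + 1 < j \<Longrightarrow> A $$ (i, j) = 0"
    and superdiagonal: "\<And>i. i + 1 < n \<Longrightarrow> A $$ (i, i + 1) \<noteq> 0"
    and v: "v \<in> mat_kernel A" and v0: "v $ 0 = 0"
  shows "v = 0\<^sub>v n"
proof -
  have rows: "(\<Sum>j<n. A $$ (i, j) * v $ j) = 0" if "i < n" for i
    using v that unfolding mat_kernel_iff_rows[OF A] by blast
  have "v $ j = 0" if "j < n" for j
    using that
  proof (induction j rule: less_induct)
    case (less j)
    show ?case
    proof (cases j)
      case 0
      then show ?thesis using v0 by simp
    next
      case (Suc i)
      have other_terms: "A $$ (i, k) * v $ k = 0" if "k < n" "k \<noteq> j" for k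
      proof (cases "k < j")
        case True
        then show ?thesis using less.IH less.prems by simp
      next
        case False
        then show ?thesis using above_zero[of k i] that Suc by simp
      qed
      have "0 = (\<Sum>k<n. A $$ (i, k) * v $ k)" using rows less.prems Suc by simp
      also have "\<dots> = (\<Sum>k<n. if k = j then A $$ (i, j) * v $ j else 0)"
        using other_terms by (intro sum.cong) auto
      also have "\<dots> = A $$ (i, j) * v $ j" using less.prems by simp
      finally show ?thesis using superdiagonal[of i] less.prems Suc by simp
    qed
  qed
  then show ?thesis using mat_kernelD(1)[OF A v] by (intro eq_vecI) auto
qed

lemma mat_kernel_eq_span_if_superdiagonal:
  fixes A :: "'a::field mat"
  assumes A: "A \<in> carrier_mat n n"
    and above_zero: "\<And>i j. j < n \<Longrightarrow> i + 1 < j \<Longrightarrow> A $$ (i, j) = 0"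
    and superdiagonal: "\<And>i. i + 1 < n \<Longrightarrow> A $$ (i, i + 1) \<noteq> 0"
    and u: "u \<in> mat_kernel A" and u0: "u $ 0 = 1" and n: "0 < n"
  shows "mat_kernel A = {t \<cdot>\<^sub>v u | t. True}"
proof (intro subset_antisym subsetI)
  fix v assume v: "v \<in> mat_kernel A"
  have uc: "u \<in> carrier_vec n" and vc: "v \<in> carrier_vec n"
    using mat_kernelD(1)[OF A] u v by auto
  define t where "t = v $ 0"
  let ?w = "v - t \<cdot>\<^sub>v u"
  have "A *\<^sub>v ?w = A *\<^sub>v v - t \<cdot>\<^sub>v (A *\<^sub>v u)"
    using A uc vc by (simp add: mult_minus_distrib_mat_vec mult_mat_vec)
  also have "\<dots> = 0\<^sub>v n"
    unfolding mat_kernelD(2)[OF A u] mat_kernelD(2)[OF A v] by (simp add: vec_eq_iff)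
  finally have "?w \<in> mat_kernel A" using A uc vc by (intro mat_kernelI) auto
  moreover have "?w $ 0 = 0" using u0 uc vc n t_def by simp
  ultimately have w: "?w = 0\<^sub>v n"
    using mat_kernel_vec_eq_0_if_superdiagonal[OF A above_zero superdiagonal] by blast
  have "v $ i = t * u $ i" if "i < n" for i
    using arg_cong[OF w, of "\<lambda>w. w $ i"] that uc vc by simp
  then have "v = t \<cdot>\<^sub>v u" using uc vc by (intro eq_vecI) auto
  then show "v \<in> {t \<cdot>\<^sub>v u | t. True}" by blast
next
  fix v assume "v \<in> {t \<cdot>\<^sub>v u | t. True}"
  then show "v \<in> mat_kernel A" using mat_kernel_smult[OF A u] by blast
qed

lemma zero_smult_add_mat:
  "B \<in> carrier_mat nr nc \<Longrightarrow> A \<in> carrier_mat nr nc \<Longrightarrow>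
    (0 :: 'a :: semiring_1) \<cdot>\<^sub>m B + A = A"
  by (rule eq_matI) simp_all

lemma one_smult_mat: "(1 :: 'a :: monoid_mult) \<cdot>\<^sub>m A = A"
  by (rule eq_matI) simp_all

lemma inter_matrix_carrier: "inter_matrix d b c \<in> carrier_mat (d+1) (d+1)"
  by (simp add: inter_matrix_def)

lemma relpowp_sym:
  assumes "symp E" and "(E ^^ n) x y"
  shows "(E ^^ n) y x"
  using assms(2)
proof (induction n arbitrary: y)
  case 0
  then show ?case by simp
next
  case (Suc n)
  then obtain z where "(E ^^ n) x z" "E z y" by (blast elim: relpowp_Suc_E)
  show ?case
    using sympD[OF assms(1) \<open>E z y\<close>] Suc.IH[OF \<open>(E ^^ n) x z\<close>] by (rule relpowp_Suc_I2)
qed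

lemma gdist_sym: "symp E \<Longrightarrow> gdist E x y = gdist E y x"
  unfolding gdist_def by (metis relpowp_sym)

lemma gdist_le: "(E ^^ n) x y \<Longrightarrow> gdist E x y \<le> n"
  unfolding gdist_def by (rule Least_le)

lemma gdist_self [simp]: "gdist E x x = 0"
  using gdist_le[of 0 E x x] by simp

locale connected_simple_graph =
  fixes V :: "'a set" and E :: "'a \<Rightarrow> 'a \<Rightarrow> bool"
  assumes simple: "simple_graph V E" and connected: "connected_graph V E"
begin

lemma finite_V: "finite V" and V_nonempty: "V \<noteq> {}"
  and adjacent_in_V: "E x y \<Longrightarrow> x \<in> V \<and> y \<in> V"
  and adjacent_sym: "symp E" and not_adjacent_self: "\<not> E x x"
  using simple unfolding simple_graph_def by (auto intro: sympI)

lemma relpowp_gdist: "x \<in> V \<Longrightarrow> y \<in> V \<Longrightarrow> (E ^^ gdist E x y) x y"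
  using connected unfolding connected_graph_def gdist_def by (metis LeastI)

lemma sphere_0: "x \<in> V \<Longrightarrow> {y \<in> V. gdist E x y = 0} = {x}"
  using relpowp_gdist by fastforce

lemma gdist_adjacent_le:
  assumes "x \<in> V" "z \<in> V" "E z y"
  shows "gdist E x y \<le> gdist E x z + 1"
  using relpowp_Suc_I[OF relpowp_gdist[OF assms(1,2)] assms(3)] gdist_le by fastforce

lemma gdist_adjacent:
  assumes "E x y"
  shows "gdist E x y = 1"
proof -
  have "gdist E x y \<le> 1" using assms gdist_le[of 1 E] by (simp only: relpowp_1)
  moreover have "gdist E x y \<noteq> 0"
  proof
    assume "gdist E x y = 0"
    then have "y \<in> {y \<in> V. gdist E x y = 0}" using adjacent_in_V[OF assms] by simp
    then have "y = x" using sphere_0 adjacent_in_V[OF assms] by blast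
    then show False using assms not_adjacent_self by simp
  qed
  ultimately show ?thesis by simp
qed

lemma gdist_SucE:
  assumes "x \<in> V" "y \<in> V" "gdist E x y = Suc m"
  obtains z where "z \<in> V" "E y z" "gdist E x z = m"
proof -
  obtain z where z: "(E ^^ m) x z" "E z y"
    using relpowp_gdist[OF assms(1,2)] assms(3) by (auto elim: relpowp_Suc_E)
  have "z \<in> V" using z(2) adjacent_in_V by blast
  then have "gdist E x z = m"
    using gdist_le[OF z(1)] gdist_adjacent_le[OF assms(1) _ z(2)] assms(3) by simp
  then show thesis using that \<open>z \<in> V\<close> z(2) adjacent_sym by (blast dest: sympD)
qed

lemma exists_gdist_eq:
  assumes "x \<in> V" "y \<in> V" "m \<le> gdist E x y"
  shows "\<exists>z\<in>V. gdist E x z = m"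
  using assms(2,3)
proof (induction "gdist E x y" arbitrary: y)
  case 0
  then show ?case by force
next
  case (Suc D)
  then obtain z where "z \<in> V" "gdist E x z = D"
    using gdist_SucE[OF assms(1)] by metis
  then show ?case using Suc by (cases "m = Suc D") auto
qed

lemma finite_gdists: "finite {gdist E x y | x y. x \<in> V \<and> y \<in> V}"
proof -
  have "{gdist E x y | x y. x \<in> V \<and> y \<in> V} = (\<lambda>(x, y). gdist E x y) ` (V \<times> V)" by auto
  then show ?thesis using finite_V by simp
qed

lemma sum_neighbour_sums:
  assumes "S \<subseteq> V"
  shows "(\<Sum>y\<in>S. \<Sum>z\<in>{z\<in>V. E y z}. g z)
           = (\<Sum>z\<in>V. g z * real (card {y\<in>S. E z y}))"
proof -
  have "finite S" using assms finite_V finite_subset by blast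
  have "(\<Sum>y\<in>S. \<Sum>z\<in>{z\<in>V. E y z}. g z)
      = (\<Sum>z\<in>V. \<Sum>y\<in>S. if E y z then g z else 0)"
    using finite_V by (simp add: sum.inter_filter sum.swap[of _ S])
  also have "\<dots> = (\<Sum>z\<in>V. g z * real (card {y\<in>S. E z y}))"
    using \<open>finite S\<close> adjacent_sym
    by (intro sum.cong)
      (auto simp: sum.inter_filter[symmetric] dest: sympD intro: arg_cong[where f = card])
  finally show ?thesis .
qed

end

locale distance_regular_graph =
  fixes V :: "'a set" and E :: "'a \<Rightarrow> 'a \<Rightarrow> bool" and d :: nat and b c :: "nat \<Rightarrow> nat"
  assumes distance_regular: "distance_regular V E d b c"

sublocale distance_regular_graph \<subseteq> connected_simple_graph
  using distance_regular unfolding distance_regular_def by unfold_locales auto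

context distance_regular_graph
begin

lemma card_neighbours_closer: "i \<le> d \<Longrightarrow> x \<in> V \<Longrightarrow> y \<in> V \<Longrightarrow> gdist E x y = i \<Longrightarrow>
    card {z\<in>V. E y z \<and> gdist E x z + 1 = i} = c i"
  and card_neighbours_farther: "i \<le> d \<Longrightarrow> x \<in> V \<Longrightarrow> y \<in> V \<Longrightarrow> gdist E x y = i \<Longrightarrow>
    card {z\<in>V. E y z \<and> gdist E x z = i + 1} = b i"
  using distance_regular unfolding distance_regular_def by blast+

lemma gdist_le_diameter:
  assumes "x \<in> V" "y \<in> V"
  shows "gdist E x y \<le> d"
  using finite_gdists assms distance_regular unfolding distance_regular_def diameter_def
  by (auto intro: Max_ge)

lemma exists_gdist_eq_diameter: "\<exists>x\<in>V. \<exists>y\<in>V. gdist E x y = d"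
proof -
  have "{gdist E x y | x y. x \<in> V \<and> y \<in> V} \<noteq> {}" using V_nonempty by blast
  with finite_gdists have "diameter V E \<in> {gdist E x y | x y. x \<in> V \<and> y \<in> V}"
    unfolding diameter_def by (rule Max_in)
  then show ?thesis using distance_regular unfolding distance_regular_def by auto
qed

lemma c_pos:
  assumes "i < d"
  shows "0 < c (i + 1)"
proof -
  obtain x y where "x \<in> V" "y \<in> V" "gdist E x y = d" using exists_gdist_eq_diameter by blast
  then obtain y' where y': "y' \<in> V" "gdist E x y' = i + 1"
    using exists_gdist_eq[of x y "i + 1"] assms by auto
  then obtain z where "z \<in> V" "E y' z" "gdist E x z = i"
    using gdist_SucE[OF \<open>x \<in> V\<close> y'(1), of i] y'(2) by auto
  then have "0 < card {z\<in>V. E y' z \<and> gdist E x z + 1 = i + 1}"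
    using finite_V by (auto simp: card_gt_0_iff)
  then show ?thesis using card_neighbours_closer[OF _ \<open>x \<in> V\<close> y'] assms by simp
qed

lemma degree: "x \<in> V \<Longrightarrow> card {y\<in>V. E x y} = b 0"
  using card_neighbours_farther[of 0 x x] gdist_adjacent by (simp cong: conj_cong)

lemma inter_matrix_index:
  "i < d + 1 \<Longrightarrow> j < d + 1 \<Longrightarrow> inter_matrix d b c $$ (i, j) =
     (if i = j then real (inter_a b c i) else if j = i + 1 then real (c (i + 1))
      else if i = j + 1 then real (b j) else 0)"
  unfolding inter_matrix_def by simp

lemma card_neighbours_at_gdist:
  assumes i: "i \<le> d" and x: "x \<in> V" and z: "z \<in> V"
  shows "real (card {y\<in>V. E z y \<and> gdist E x y = i}) = inter_matrix d b c $$ (i, gdist E x z)"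
proof -
  define j where "j = gdist E x z"
  have j: "j \<le> d" using gdist_le_diameter[OF x z] j_def by simp
  note closer = card_neighbours_closer[OF j x z j_def[symmetric]]
  note farther = card_neighbours_farther[OF j x z j_def[symmetric]]
  have near: "gdist E x y \<le> j + 1 \<and> j \<le> gdist E x y + 1" if "E z y" for y
    using gdist_adjacent_le[OF x z that] gdist_adjacent_le[OF x _ adjacent_sym[THEN sympD, OF that]]
      adjacent_in_V[OF that] j_def by auto
  consider "i = j" | "j = i + 1" | "i = j + 1" | "i \<noteq> j" "j \<noteq> i + 1" "i \<noteq> j + 1" by blast
  then show ?thesis
  proof cases
    case 1
    let ?X = "{y\<in>V. E z y \<and> gdist E x y + 1 = j}"
    let ?Y = "{y\<in>V. E z y \<and> gdist E x y = i}"
    let ?Z = "{y\<in>V. E z y \<and> gdist E x y = j + 1}"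
    have "gdist E x y + 1 = j \<or> gdist E x y = i \<or> gdist E x y = j + 1" if "E z y" for y
      using near[OF that] 1 by linarith
    then have "{y\<in>V. E z y} = ?X \<union> ?Y \<union> ?Z" by blast
    moreover have "card (?X \<union> ?Y \<union> ?Z) = card ?X + card ?Y + card ?Z"
      using finite_V 1 by (subst card_Un_disjoint, auto)+
    ultimately have "b 0 = c j + card ?Y + b j" using degree[OF z] closer farther by simp
    then show ?thesis using 1 i j unfolding j_def by (simp add: inter_matrix_index inter_a_def)
  next
    case 2
    then show ?thesis using closer i j unfolding j_def by (simp add: inter_matrix_index)
  next
    case 3
    then show ?thesis using farther i j unfolding j_def by (simp add: inter_matrix_index)
  next
    case 4
    have "gdist E x y \<noteq> i" if "E z y" for y using near[OF that] 4 by linarith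
    then have empty: "{y\<in>V. E z y \<and> gdist E x y = i} = {}" by blast
    show ?thesis using 4 i j unfolding j_def by (simp add: inter_matrix_index empty)
  qed
qed

definition sphere_sums :: "('a \<Rightarrow> real) \<Rightarrow> 'a \<Rightarrow> real vec" where
  "sphere_sums f x = vec (d + 1) (\<lambda>j. \<Sum>y\<in>{y\<in>V. gdist E x y = j}. f y)"

lemma inter_matrix_row_sphere_sums:
  assumes i: "i \<le> d" and x: "x \<in> V"
  shows "(\<Sum>j<d+1. inter_matrix d b c $$ (i, j) * sphere_sums f x $ j)
           = (\<Sum>y\<in>{y\<in>V. gdist E x y = i}. \<Sum>z\<in>{z\<in>V. E y z}. f z)"
proof -
  have "(\<Sum>y\<in>{y\<in>V. gdist E x y = i}. \<Sum>z\<in>{z\<in>V. E y z}. f z)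
      = (\<Sum>z\<in>V. f z * real (card {y\<in>{y\<in>V. gdist E x y = i}. E z y}))"
    by (rule sum_neighbour_sums) auto
  also have "\<dots> = (\<Sum>z\<in>V. f z * inter_matrix d b c $$ (i, gdist E x z))"
  proof (intro sum.cong refl)
    fix z assume "z \<in> V"
    have "{y\<in>{y\<in>V. gdist E x y = i}. E z y} = {y\<in>V. E z y \<and> gdist E x y = i}" by auto
    then show "f z * real (card {y\<in>{y\<in>V. gdist E x y = i}. E z y})
        = f z * inter_matrix d b c $$ (i, gdist E x z)"
      using card_neighbours_at_gdist[OF i x \<open>z \<in> V\<close>] by simp
  qed
  also have "\<dots> = (\<Sum>j<d+1. \<Sum>z\<in>{z\<in>V. gdist E x z = j}.
                      f z * inter_matrix d b c $$ (i, gdist E x z))"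
    by (rule sum.group[symmetric, OF finite_V finite_lessThan, where g = "gdist E x"])
      (use gdist_le_diameter[OF x] in \<open>auto simp: less_Suc_eq_le\<close>)
  also have "\<dots> = (\<Sum>j<d+1. inter_matrix d b c $$ (i, j) * sphere_sums f x $ j)"
    unfolding sphere_sums_def by (intro sum.cong) (auto simp: sum_distrib_left mult.commute)
  finally show ?thesis by simp
qed

lemma sphere_sums_0: "x \<in> V \<Longrightarrow> sphere_sums f x $ 0 = f x"
  by (simp add: sphere_sums_def sphere_0)

lemma sphere_sums_in_kernel:
  assumes x: "x \<in> V"
    and eigen: "\<And>y. y \<in> V \<Longrightarrow> (\<Sum>z\<in>{z\<in>V. E y z}. f z) + s * f y = 0"
  shows "sphere_sums f x \<in> mat_kernel (s \<cdot>\<^sub>m 1\<^sub>m (d+1) + inter_matrix d b c)"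
proof -
  let ?W = "sphere_sums f x"
  have M: "s \<cdot>\<^sub>m 1\<^sub>m (d+1) + inter_matrix d b c \<in> carrier_mat (d+1) (d+1)"
    by (simp add: inter_matrix_def)
  have "(\<Sum>j<d+1. (s \<cdot>\<^sub>m 1\<^sub>m (d+1) + inter_matrix d b c) $$ (i, j) * ?W $ j) = 0"
    if i: "i < d + 1" for i
  proof -
    have "(\<Sum>j<d+1. (s \<cdot>\<^sub>m 1\<^sub>m (d+1) + inter_matrix d b c) $$ (i, j) * ?W $ j)
        = (\<Sum>j<d+1. (if i = j then s * ?W $ j else 0))
          + (\<Sum>j<d+1. inter_matrix d b c $$ (i, j) * ?W $ j)"
      unfolding sum.distrib[symmetric] using i
      by (intro sum.cong) (auto simp: inter_matrix_def algebra_simps)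
    also have "\<dots> = s * ?W $ i + (\<Sum>y\<in>{y\<in>V. gdist E x y = i}. \<Sum>z\<in>{z\<in>V. E y z}. f z)"
      using i x inter_matrix_row_sphere_sums by simp
    also have "\<dots> = (\<Sum>y\<in>{y\<in>V. gdist E x y = i}. (\<Sum>z\<in>{z\<in>V. E y z}. f z) + s * f y)"
      using i by (simp add: sphere_sums_def sum.distrib sum_distrib_left)
    also have "\<dots> = 0" using eigen by simp
    finally show ?thesis .
  qed
  then show ?thesis unfolding mat_kernel_iff_rows[OF M] by (simp add: sphere_sums_def)
qed

lemma magic_constant_eq_0:
  fixes g :: "'a \<Rightarrow> real"
  assumes const: "\<And>x. x \<in> V \<Longrightarrow> (\<Sum>y\<in>{y\<in>V. E x y}. g y) + s * g x = k"
    and sum_0: "(\<Sum>y\<in>V. g y) = 0"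
  shows "k = 0"
proof -
  have "real (card V) * k = (\<Sum>x\<in>V. (\<Sum>y\<in>{y\<in>V. E x y}. g y) + s * g x)"
    using const by simp
  also have "\<dots> = (\<Sum>z\<in>V. g z * real (card {y\<in>V. E z y})) + s * (\<Sum>x\<in>V. g x)"
    by (simp add: sum.distrib sum_distrib_left sum_neighbour_sums)
  also have "\<dots> = (\<Sum>z\<in>V. g z) * real (b 0) + s * (\<Sum>x\<in>V. g x)"
    using degree by (simp add: sum_distrib_right)
  finally show ?thesis using sum_0 finite_V V_nonempty by simp
qed

lemma centred_magic_labeling:
  assumes l: "bij_betw l V {1..card V}"
    and magic: "\<And>x. x \<in> V \<Longrightarrow> real (\<Sum>y\<in>{y\<in>V. E x y}. l y) + s * real (l x) = k"
  obtains f :: "'a \<Rightarrow> real"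
  where "inj_on f V" "\<And>x. x \<in> V \<Longrightarrow> (\<Sum>y\<in>{y\<in>V. E x y}. f y) + s * f x = 0"
proof -
  define m where "m = (real (card V) + 1) / 2"
  define f where "f y = real (l y) - m" for y
  have "inj_on f V" using bij_betw_imp_inj_on[OF l] unfolding f_def inj_on_def by simp
  have "(\<Sum>y\<in>V. real (l y)) = (\<Sum>i = 1..card V. real i)"
    using sum.reindex_bij_betw[OF l, of real] by simp
  then have "(\<Sum>y\<in>V. f y) = (\<Sum>i = 1..card V. real i) - real (card V) * m"
    unfolding f_def by (simp add: sum_subtractf)
  also have "\<dots> = 0"
    using double_gauss_sum_from_Suc_0[of "card V", where 'a = real] by (simp add: m_def field_simps)
  finally have "(\<Sum>y\<in>V. f y) = 0" .
  have shifted: "(\<Sum>y\<in>{y\<in>V. E x y}. f y) + s * f x = k - (real (b 0) + s) * m"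
    if "x \<in> V" for x
    using magic[OF that] degree[OF that] unfolding f_def by (simp add: sum_subtractf algebra_simps)
  then have "k - (real (b 0) + s) * m = 0"
    using magic_constant_eq_0 \<open>(\<Sum>y\<in>V. f y) = 0\<close> by blast
  with \<open>inj_on f V\<close> shifted show thesis by (intro that) auto
qed

lemma sphere_diameter_singleton:
  assumes anti: "antipodal_double_cover V E d" and "x \<in> V" "y \<in> V" "gdist E x y = d"
  shows "{z\<in>V. gdist E x z = d} = {y}"
  using assms unfolding antipodal_double_cover_def by blast

lemma mat_kernel_shifted_inter_matrix_eq_span:
  assumes "u \<in> mat_kernel (s \<cdot>\<^sub>m 1\<^sub>m (d+1) + inter_matrix d b c)" "u $ 0 = 1"
  shows "mat_kernel (s \<cdot>\<^sub>m 1\<^sub>m (d+1) + inter_matrix d b c) = {t \<cdot>\<^sub>v u | t. True}"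
  using _ _ _ assms
proof (rule mat_kernel_eq_span_if_superdiagonal)
  show "s \<cdot>\<^sub>m 1\<^sub>m (d+1) + inter_matrix d b c \<in> carrier_mat (d+1) (d+1)"
    by (simp add: inter_matrix_def)
  show "(s \<cdot>\<^sub>m 1\<^sub>m (d+1) + inter_matrix d b c) $$ (i, j) = 0" if "j < d + 1" "i + 1 < j" for i j
    using that by (simp add: inter_matrix_def)
  show "(s \<cdot>\<^sub>m 1\<^sub>m (d+1) + inter_matrix d b c) $$ (i, i + 1) \<noteq> 0" if "i + 1 < d + 1" for i
    using that c_pos[of i] by (simp add: inter_matrix_def)
qed simp

lemma mat_kernel_shifted_inter_matrix:
  assumes anti: "antipodal_double_cover V E d" and d: "1 \<le> d" and inj: "inj_on f V"
    and eigen: "\<And>y. y \<in> V \<Longrightarrow> (\<Sum>z\<in>{z\<in>V. E y z}. f z) + s * f y = 0"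
  shows "\<exists>u \<in> carrier_vec (d+1). u $ 0 = 1 \<and> u $ d = -1 \<and>
           mat_kernel (s \<cdot>\<^sub>m 1\<^sub>m (d+1) + inter_matrix d b c) = {t \<cdot>\<^sub>v u | t. True}"
proof -
  let ?M = "s \<cdot>\<^sub>m 1\<^sub>m (d+1) + inter_matrix d b c"
  have M: "?M \<in> carrier_mat (d+1) (d+1)" by (simp add: inter_matrix_def)
  obtain x y where xy: "x \<in> V" "y \<in> V" "gdist E x y = d" "gdist E y x = d" and fx: "f x \<noteq> 0"
  proof -
    obtain x y where xy: "x \<in> V" "y \<in> V" "gdist E x y = d"
      using exists_gdist_eq_diameter by blast
    moreover have "gdist E y x = d" using xy gdist_sym[OF adjacent_sym] by metis
    moreover have "f x \<noteq> f y" using inj_onD[OF inj _ xy(1,2)] xy(3) d by auto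
    ultimately show thesis using that by (cases "f x = 0") auto
  qed
  define u where "u = (1 / f x) \<cdot>\<^sub>v sphere_sums f x"
  have u: "u \<in> carrier_vec (d+1)" "u $ 0 = 1"
    using fx xy(1) sphere_sums_0 unfolding u_def by (auto simp: sphere_sums_def)
  have "u \<in> mat_kernel ?M"
    unfolding u_def by (rule mat_kernel_smult[OF M sphere_sums_in_kernel[OF xy(1) eigen]])
  then have kernel: "mat_kernel ?M = {t \<cdot>\<^sub>v u | t. True}"
    using u(2) by (rule mat_kernel_shifted_inter_matrix_eq_span)
  have scaled: "sphere_sums f z $ d = f z * u $ d" if z: "z \<in> V" for z
  proof -
    obtain t where t: "sphere_sums f z = t \<cdot>\<^sub>v u"
      using sphere_sums_in_kernel[OF z eigen] kernel by blast
    have "f z = t" using sphere_sums_0[OF z, of f] u unfolding t by simp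
    then show ?thesis using t u by simp
  qed
  have antipodes: "sphere_sums f z $ d = f w" if "z \<in> V" "w \<in> V" "gdist E z w = d" for z w
    using sphere_diameter_singleton[OF anti that] by (simp add: sphere_sums_def)
  have "f y = f x * u $ d" "f x = f y * u $ d"
    using scaled antipodes xy by metis+
  then have "(u $ d)\<^sup>2 = 1" using fx by (simp add: power2_eq_square algebra_simps)
  moreover have "u $ d \<noteq> 1"
    using \<open>f y = f x * u $ d\<close> inj_onD[OF inj _ xy(2,1)] xy(3) d by auto
  ultimately have "u $ d = -1" by (simp add: power2_eq_1_iff)
  then show ?thesis using u kernel by blast
qed

lemma mat_kernel_inter_matrix_if_distance_magic:
  assumes "antipodal_double_cover V E d" "1 \<le> d" "distance_magic V E"
  shows "\<exists>u \<in> carrier_vec (d+1). u $ 0 = 1 \<and> u $ d = -1 \<and>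
           mat_kernel (inter_matrix d b c) = {t \<cdot>\<^sub>v u | t. True}"
proof -
  obtain l k where l: "bij_betw l V {1..card V}" and "\<forall>x\<in>V. (\<Sum>y\<in>{y\<in>V. E x y}. l y) = k"
    using assms(3) unfolding distance_magic_def by blast
  then have magic: "real (\<Sum>y\<in>{y\<in>V. E x y}. l y) + 0 * real (l x) = real k" if "x \<in> V" for x
    using that by simp
  obtain f :: "'a \<Rightarrow> real"
    where "inj_on f V" "\<And>x. x \<in> V \<Longrightarrow> (\<Sum>y\<in>{y\<in>V. E x y}. f y) + 0 * f x = 0"
    using centred_magic_labeling[OF l magic] by metis
  from mat_kernel_shifted_inter_matrix[OF assms(1,2) this] show ?thesis
    unfolding zero_smult_add_mat[OF one_carrier_mat inter_matrix_carrier] .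
qed

lemma mat_kernel_one_add_inter_matrix_if_closed_distance_magic:
  assumes "antipodal_double_cover V E d" "1 \<le> d" "closed_distance_magic V E"
  shows "\<exists>u \<in> carrier_vec (d+1). u $ 0 = 1 \<and> u $ d = -1 \<and>
           mat_kernel (1\<^sub>m (d+1) + inter_matrix d b c) = {t \<cdot>\<^sub>v u | t. True}"
proof -
  obtain l k where l: "bij_betw l V {1..card V}"
    and closed_sums: "\<forall>x\<in>V. (\<Sum>y\<in>{y\<in>V. E x y} \<union> {x}. l y) = k"
    using assms(3) unfolding closed_distance_magic_def by blast
  have magic: "real (\<Sum>y\<in>{y\<in>V. E x y}. l y) + 1 * real (l x) = real k" if "x \<in> V" for x
  proof -
    have "(\<Sum>y\<in>{y\<in>V. E x y} \<union> {x}. l y) = (\<Sum>y\<in>{y\<in>V. E x y}. l y) + l x"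
      using finite_V not_adjacent_self[of x] by (simp add: add.commute)
    then show ?thesis using closed_sums that by (metis mult_1 of_nat_add)
  qed
  obtain f :: "'a \<Rightarrow> real"
    where "inj_on f V" "\<And>x. x \<in> V \<Longrightarrow> (\<Sum>y\<in>{y\<in>V. E x y}. f y) + 1 * f x = 0"
    using centred_magic_labeling[OF l magic] by metis
  from mat_kernel_shifted_inter_matrix[OF assms(1,2) this] show ?thesis
    unfolding one_smult_mat .
qed

end

theorem lemma2p5:
  fixes V :: "'a set" and E :: "'a \<Rightarrow> 'a \<Rightarrow> bool" and d :: nat and b c :: "nat \<Rightarrow> nat"
  assumes "distance_regular V E d b c"
    and "d \<ge> 1"
    and "antipodal_double_cover V E d"
  shows "(distance_magic V E \<longrightarrow>
           (\<exists>u \<in> carrier_vec (d+1). u $ 0 = 1 \<and> u $ d = -1 \<and>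
              mat_kernel (inter_matrix d b c) = {t \<cdot>\<^sub>v u | t. True}))
       \<and> (closed_distance_magic V E \<longrightarrow>
           (\<exists>u \<in> carrier_vec (d+1). u $ 0 = 1 \<and> u $ d = -1 \<and>
              mat_kernel (1\<^sub>m (d+1) + inter_matrix d b c) = {t \<cdot>\<^sub>v u | t. True}))"
proof -
  interpret distance_regular_graph V E d b c by unfold_locales (fact assms(1))
  show ?thesis
    by (intro conjI impI mat_kernel_inter_matrix_if_distance_magic[OF assms(3,2)]
        mat_kernel_one_add_inter_matrix_if_closed_distance_magic[OF assms(3,2)])
qed

end
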